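(* (a) $\mathsf{P}=\mathsf{U_{tot}P}=\mathsf{Few_{tot}P}$. (b) If $\mathsf{FewP}\subseteq\mathsf{Few_{tot}P}$, then $\mathsf{P}=\mathsf{FewP}$.
   Context: An NPTM is a non-deterministic polynomial-time Turing machine. For an NPTM $M$ and input $x$, $acc_M(x)$ is the number of accepting paths of $M$ on $x$ and $tot_M(x)$ is the number of all computation paths of $M$ on $x$ minus $1$. $\#\mathsf{P}=\{acc_M\}$, $\mathsf{TotP}=\{tot_M\}$ over all NPTMs $M$. $\mathsf{U_{tot}P}$ is the class of languages $L$ for which there is $f\in\mathsf{TotP}$ with $f(x)=1$ if $x\in L$ and $f(x)=0$ if $x\notin L$. $\mathsf{FewP}$ is the class of languages $L$ for which there are $f\in\#\mathsf{P}$ and a polynomial $p$ such that $0<f(x)\le p(|x|)$ if $x\in L$ and $f(x)=0$ if $x\notin L$; $\mathsf{Few_{tot}P}$ is defined identically with $f\in\mathsf{TotP}$. *)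

theory Defs
  imports Main
begin

text \<open>A single-tape nondeterministic Turing machine over input alphabet {0,1}.
  Tape symbols are naturals below ntm_syms; symbol 0 is the blank, the input
  bit False is written as 1 and True as 2. States are naturals below
  ntm_states, the initial state is 0. The transition function gives, for a
  state and a scanned symbol, the list of possible moves
  (new state, written symbol, head displacement in {-1,0,1}); an empty list
  means the machine halts. A computation path is identified with the
  sequence of nondeterministic choices (indices into these lists) made
  until halting.\<close>

record ntm =
  ntm_states :: nat
  ntm_syms :: nat
  ntm_delta :: "nat \<Rightarrow> nat \<Rightarrow> (nat \<times> nat \<times> int) list"
  ntm_accept :: "nat set"

type_synonym config = "nat \<times> (int \<Rightarrow> nat) \<times> int"

definition ntm_wf :: "ntm \<Rightarrow> bool" where
  "ntm_wf M \<longleftrightarrow> 0 < ntm_states M \<and> 3 \<le> ntm_syms M \<and>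
     (\<forall>q s q' s' d. (q', s', d) \<in> set (ntm_delta M q s) \<longrightarrow>
        q' < ntm_states M \<and> s' < ntm_syms M \<and> d \<in> {-1, 0, 1})"

definition init_config :: "bool list \<Rightarrow> config" where
  "init_config x = (0, (\<lambda>i. if 0 \<le> i \<and> nat i < length x
                           then (if x ! nat i then 2 else 1) else 0), 0)"

definition step_choice :: "ntm \<Rightarrow> config \<Rightarrow> nat \<Rightarrow> config option" where
  "step_choice M c i = (case c of (q, t, h) \<Rightarrow>
     (let ts = ntm_delta M q (t h) in
      if i < length ts then
        (case ts ! i of (q', s', d) \<Rightarrow> Some (q', t(h := s'), h + d))
      else None))"

fun run_choices :: "ntm \<Rightarrow> config \<Rightarrow> nat list \<Rightarrow> config option" where
  "run_choices M c [] = Some c"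
| "run_choices M c (i # cs) =
     (case step_choice M c i of None \<Rightarrow> None | Some c' \<Rightarrow> run_choices M c' cs)"

definition halted :: "ntm \<Rightarrow> config \<Rightarrow> bool" where
  "halted M c = (case c of (q, t, h) \<Rightarrow> ntm_delta M q (t h) = [])"

definition comp_paths :: "ntm \<Rightarrow> bool list \<Rightarrow> nat list set" where
  "comp_paths M x = {cs. \<exists>c. run_choices M (init_config x) cs = Some c \<and> halted M c}"

definition acc_paths :: "ntm \<Rightarrow> bool list \<Rightarrow> nat list set" where
  "acc_paths M x = {cs. \<exists>c. run_choices M (init_config x) cs = Some c \<and> halted M c
                          \<and> fst c \<in> ntm_accept M}"

definition acc :: "ntm \<Rightarrow> bool list \<Rightarrow> nat" where
  "acc M x = card (acc_paths M x)"

definition tot :: "ntm \<Rightarrow> bool list \<Rightarrow> nat" where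
  "tot M x = card (comp_paths M x) - 1"

definition poly_time :: "ntm \<Rightarrow> bool" where
  "poly_time M \<longleftrightarrow> (\<exists>k c::nat. \<forall>x cs. run_choices M (init_config x) cs \<noteq> None
                       \<longrightarrow> length cs \<le> c * length x ^ k + c)"

definition NPTM :: "ntm \<Rightarrow> bool" where
  "NPTM M \<longleftrightarrow> ntm_wf M \<and> poly_time M"

definition deterministic :: "ntm \<Rightarrow> bool" where
  "deterministic M \<longleftrightarrow> (\<forall>q s. length (ntm_delta M q s) \<le> 1)"

definition SharpP :: "(bool list \<Rightarrow> nat) set" where
  "SharpP = {f. \<exists>M. NPTM M \<and> (\<forall>x. f x = acc M x)}"

definition TotP :: "(bool list \<Rightarrow> nat) set" where
  "TotP = {f. \<exists>M. NPTM M \<and> (\<forall>x. f x = tot M x)}"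

definition P_class :: "bool list set set" where
  "P_class = {L. \<exists>M. NPTM M \<and> deterministic M \<and> (\<forall>x. x \<in> L \<longleftrightarrow> acc M x > 0)}"

definition U_tot_P :: "bool list set set" where
  "U_tot_P = {L. \<exists>f \<in> TotP. \<forall>x. (x \<in> L \<longrightarrow> f x = 1) \<and> (x \<notin> L \<longrightarrow> f x = 0)}"

definition FewP :: "bool list set set" where
  "FewP = {L. \<exists>f \<in> SharpP. \<exists>k c::nat. \<forall>x.
     (x \<in> L \<longrightarrow> 0 < f x \<and> f x \<le> c * length x ^ k + c) \<and> (x \<notin> L \<longrightarrow> f x = 0)}"

definition Few_tot_P :: "bool list set set" where
  "Few_tot_P = {L. \<exists>f \<in> TotP. \<exists>k c::nat. \<forall>x.
     (x \<in> L \<longrightarrow> 0 < f x \<and> f x \<le> c * length x ^ k + c) \<and> (x \<notin> L \<longrightarrow> f x = 0)}"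

end

theory Submission
  imports Defs
begin

text \<open>
  The value tot M x is positive exactly when some configuration reachable by M on x offers at
  least two moves; otherwise every configuration met has at most one move and there is a single
  computation path. A deterministic machine decides this: run M until the first configuration
  with two or more moves and accept there (the machine divert M E 1, with E saying that at least
  two moves are available, has at most one move everywhere). Hence Few_tot_P is contained in P.
  Conversely, if M is deterministic, giving every accepting halting configuration two moves into
  a fresh halting state doubles the single computation path exactly when M accepts, so the new
  machine has tot = acc M, which is 0 or 1; thus P is contained in U_tot_P, and U_tot_P in
  Few_tot_P trivially. Part (b) follows since P is contained in FewP: a deterministic machine has
  at most one accepting path.
\<close>

definition options :: "ntm \<Rightarrow> config \<Rightarrow> (nat \<times> nat \<times> int) list" where
  "options M c = (case c of (q, t, h) \<Rightarrow> ntm_delta M q (t h))"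

lemma halted_iff_options_Nil: "halted M c \<longleftrightarrow> options M c = []"
  by (cases c) (simp add: halted_def options_def)

lemma step_choice_eq_None_iff: "step_choice M c i = None \<longleftrightarrow> length (options M c) \<le> i"
  by (cases c) (auto simp: step_choice_def options_def Let_def split: prod.split)

lemma step_choice_Some_less: "step_choice M c i = Some c' \<Longrightarrow> i < length (options M c)"
  by (metis not_le option.distinct(1) step_choice_eq_None_iff)

lemma halted_step_choice: "halted M c \<Longrightarrow> step_choice M c i = None"
  by (simp add: halted_iff_options_Nil step_choice_eq_None_iff)

lemma step_choice_state_less:
  assumes "ntm_wf M" and "step_choice M c i = Some c'"
  shows "fst c' < ntm_states M"
proof (cases c)
  case (fields q t h)
  let ?ts = "ntm_delta M q (t h)"
  obtain q' s' d where move: "?ts ! i = (q', s', d)" by (cases "?ts ! i")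
  have "i < length ?ts" and c': "c' = (q', t(h := s'), h + d)"
    using assms(2) fields move by (auto simp: step_choice_def Let_def split: if_splits)
  then have "(q', s', d) \<in> set ?ts" by (metis move nth_mem)
  then show ?thesis using assms(1) c' by (simp add: ntm_wf_def)
qed

lemma run_choices_append:
  "run_choices M c (xs @ ys) =
     (case run_choices M c xs of None \<Rightarrow> None | Some c' \<Rightarrow> run_choices M c' ys)"
  by (induction xs arbitrary: c) (auto split: option.split)

definition comp_paths_from :: "ntm \<Rightarrow> config \<Rightarrow> nat list set" where
  "comp_paths_from M c = {cs. \<exists>c'. run_choices M c cs = Some c' \<and> halted M c'}"

definition acc_paths_from :: "ntm \<Rightarrow> config \<Rightarrow> nat list set" where
  "acc_paths_from M c =
     {cs. \<exists>c'. run_choices M c cs = Some c' \<and> halted M c' \<and> fst c' \<in> ntm_accept M}"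

lemma comp_paths_eq_from: "comp_paths M x = comp_paths_from M (init_config x)"
  by (simp add: comp_paths_def comp_paths_from_def)

lemma acc_paths_eq_from: "acc_paths M x = acc_paths_from M (init_config x)"
  by (simp add: acc_paths_def acc_paths_from_def)

lemma acc_paths_from_subset: "acc_paths_from M c \<subseteq> comp_paths_from M c"
  by (auto simp: acc_paths_from_def comp_paths_from_def)

lemma Nil_mem_comp_paths_from [simp]: "[] \<in> comp_paths_from M c \<longleftrightarrow> halted M c"
  by (cases c) (simp add: comp_paths_from_def)

lemma Cons_mem_comp_paths_from [simp]:
  "i # cs \<in> comp_paths_from M c \<longleftrightarrow>
     (\<exists>c'. step_choice M c i = Some c' \<and> cs \<in> comp_paths_from M c')"
  by (auto simp: comp_paths_from_def split: option.splits)

lemma Nil_mem_acc_paths_from [simp]: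
  "[] \<in> acc_paths_from M c \<longleftrightarrow> halted M c \<and> fst c \<in> ntm_accept M"
  by (cases c) (simp add: acc_paths_from_def)

lemma Cons_mem_acc_paths_from [simp]:
  "i # cs \<in> acc_paths_from M c \<longleftrightarrow>
     (\<exists>c'. step_choice M c i = Some c' \<and> cs \<in> acc_paths_from M c')"
  by (auto simp: acc_paths_from_def split: option.splits)

definition runs_bounded :: "ntm \<Rightarrow> config \<Rightarrow> nat \<Rightarrow> bool" where
  "runs_bounded M c B \<longleftrightarrow> (\<forall>cs. run_choices M c cs \<noteq> None \<longrightarrow> length cs \<le> B)"

lemma poly_time_runs_bounded: "poly_time M \<Longrightarrow> \<exists>B. runs_bounded M (init_config x) B"
  unfolding poly_time_def runs_bounded_def by blast

lemma runs_bounded_run_choices: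
  assumes "runs_bounded M c B" and "run_choices M c p = Some c'"
  shows "runs_bounded M c' (B - length p)"
  unfolding runs_bounded_def
proof (intro allI impI)
  fix cs assume "run_choices M c' cs \<noteq> None"
  then have "run_choices M c (p @ cs) \<noteq> None" using assms(2) by (simp add: run_choices_append)
  then show "length cs \<le> B - length p" using assms(1) by (fastforce simp: runs_bounded_def)
qed

lemma finite_runs_upto: "finite {cs. length cs \<le> n \<and> run_choices M c cs \<noteq> None}"
proof (induction n arbitrary: c)
  case 0
  have "{cs. length cs \<le> 0 \<and> run_choices M c cs \<noteq> None} \<subseteq> {[]}" by auto
  then show ?case by (rule finite_subset) simp
next
  case (Suc n)
  let ?tails = "\<lambda>i. {cs. length cs \<le> n \<and> run_choices M (the (step_choice M c i)) cs \<noteq> None}"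
  have "{cs. length cs \<le> Suc n \<and> run_choices M c cs \<noteq> None} \<subseteq>
          insert [] (\<Union>i<length (options M c). (#) i ` ?tails i)"
  proof
    fix cs assume cs: "cs \<in> {cs. length cs \<le> Suc n \<and> run_choices M c cs \<noteq> None}"
    show "cs \<in> insert [] (\<Union>i<length (options M c). (#) i ` ?tails i)"
    proof (cases cs)
      case (Cons i r)
      with cs obtain c' where c': "step_choice M c i = Some c'" by (auto split: option.splits)
      then have "i < length (options M c)" by (rule step_choice_Some_less)
      moreover have "r \<in> ?tails i" using cs Cons c' by simp
      ultimately show ?thesis using Cons by blast
    qed simp
  qed
  then show ?case
    by (rule finite_subset) (intro finite.insertI finite_UN_I finite_lessThan finite_imageI Suc.IH)
qed

lemma finite_comp_paths_from: "runs_bounded M c B \<Longrightarrow> finite (comp_paths_from M c)"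
  by (rule finite_subset[OF _ finite_runs_upto[of B M c]])
    (auto simp: comp_paths_from_def runs_bounded_def)

lemma comp_paths_from_nonempty: "runs_bounded M c B \<Longrightarrow> comp_paths_from M c \<noteq> {}"
proof (induction B arbitrary: c)
  case (0 c)
  then have "step_choice M c 0 = None"
    by (cases "step_choice M c 0") (auto simp: runs_bounded_def dest: spec[of _ "[0]"])
  then have "halted M c" by (simp add: halted_iff_options_Nil step_choice_eq_None_iff)
  then show ?case by (metis Nil_mem_comp_paths_from empty_iff)
next
  case (Suc B c)
  show ?case
  proof (cases "halted M c")
    case False
    then obtain c' where step: "step_choice M c 0 = Some c'"
      by (cases "step_choice M c 0") (auto simp: halted_iff_options_Nil step_choice_eq_None_iff)
    then have "runs_bounded M c' B"
      using runs_bounded_run_choices[OF Suc.prems, of "[0]"] by simp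
    then obtain cs where "cs \<in> comp_paths_from M c'" using Suc.IH by blast
    then have "0 # cs \<in> comp_paths_from M c" using step by simp
    then show ?thesis by blast
  qed (metis Nil_mem_comp_paths_from empty_iff)
qed

definition branching_reachable :: "ntm \<Rightarrow> config \<Rightarrow> bool" where
  "branching_reachable M c \<longleftrightarrow>
     (\<exists>cs c'. run_choices M c cs = Some c' \<and> 2 \<le> length (options M c'))"

lemma branching_reachable_step:
  assumes "step_choice M c i = Some c'" and "branching_reachable M c'"
  shows "branching_reachable M c"
proof -
  obtain cs c'' where "run_choices M c' cs = Some c''" and "2 \<le> length (options M c'')"
    using assms(2) unfolding branching_reachable_def by blast
  then have "run_choices M c (i # cs) = Some c''" and "2 \<le> length (options M c'')"
    using assms(1) by simp_all
  then show ?thesis unfolding branching_reachable_def by blast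
qed

lemma comp_paths_from_unique:
  assumes "\<not> branching_reachable M c"
    and "cs1 \<in> comp_paths_from M c" and "cs2 \<in> comp_paths_from M c"
  shows "cs1 = cs2"
  using assms
proof (induction cs1 arbitrary: c cs2)
  case Nil
  then show ?case by (cases cs2) (auto simp: halted_step_choice)
next
  case (Cons i r)
  then obtain c' where step_i: "step_choice M c i = Some c'" and r: "r \<in> comp_paths_from M c'"
    by auto
  obtain j r2 where cs2: "cs2 = j # r2"
    using Cons.prems(3) step_i by (cases cs2) (auto simp: halted_step_choice)
  with Cons.prems(3) obtain c'' where step_j: "step_choice M c j = Some c''"
    and r2: "r2 \<in> comp_paths_from M c''"
    by auto
  have "length (options M c) \<le> 1"
    using Cons.prems(1) unfolding branching_reachable_def
    by (metis Suc_1 not_less_eq_eq run_choices.simps(1))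
  then have "i = 0" and "j = 0"
    using step_choice_Some_less[OF step_i] step_choice_Some_less[OF step_j] by auto
  moreover have "\<not> branching_reachable M c'"
    using Cons.prems(1) step_i branching_reachable_step by blast
  ultimately show ?case using Cons.IH r r2 step_i step_j cs2 by simp
qed

lemma two_le_card_comp_paths_from:
  assumes bounded: "runs_bounded M c B" and "branching_reachable M c"
  shows "2 \<le> card (comp_paths_from M c)"
proof -
  obtain p c' where p: "run_choices M c p = Some c'" and two: "2 \<le> length (options M c')"
    using assms(2) unfolding branching_reachable_def by blast
  have "\<exists>cs. p @ i # cs \<in> comp_paths_from M c" if "i < 2" for i
  proof -
    obtain c'' where step: "step_choice M c' i = Some c''"
      using \<open>i < 2\<close> two by (cases "step_choice M c' i") (auto simp: step_choice_eq_None_iff)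
    then have "run_choices M c (p @ [i]) = Some c''" using p by (simp add: run_choices_append)
    then have "runs_bounded M c'' (B - length (p @ [i]))"
      using runs_bounded_run_choices[OF bounded] by blast
    then obtain cs where "cs \<in> comp_paths_from M c''" using comp_paths_from_nonempty by blast
    then have "p @ i # cs \<in> comp_paths_from M c"
      using p step by (auto simp: comp_paths_from_def run_choices_append)
    then show ?thesis by blast
  qed
  from this[of 0] this[of 1] obtain cs0 cs1
    where "p @ 0 # cs0 \<in> comp_paths_from M c" and "p @ 1 # cs1 \<in> comp_paths_from M c"
    by auto
  then have "{p @ 0 # cs0, p @ 1 # cs1} \<subseteq> comp_paths_from M c" by simp
  from card_mono[OF finite_comp_paths_from[OF bounded] this] show ?thesis by simp
qed

lemma tot_pos_iff_branching_reachable: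
  assumes "poly_time M"
  shows "0 < tot M x \<longleftrightarrow> branching_reachable M (init_config x)"
proof -
  obtain B where bounded: "runs_bounded M (init_config x) B"
    using poly_time_runs_bounded[OF assms] by blast
  have "card (comp_paths M x) \<le> 1" if "\<not> branching_reachable M (init_config x)"
    using comp_paths_from_unique[OF that] finite_comp_paths_from[OF bounded]
    by (simp add: comp_paths_eq_from card_le_Suc0_iff_eq)
  moreover have "2 \<le> card (comp_paths M x)" if "branching_reachable M (init_config x)"
    using two_le_card_comp_paths_from[OF bounded that] by (simp add: comp_paths_eq_from)
  ultimately show ?thesis unfolding tot_def by fastforce
qed

lemma deterministic_comp_paths_singleton:
  assumes "poly_time M" and "deterministic M"
  shows "\<exists>p. comp_paths M x = {p}"
proof -
  obtain B where bounded: "runs_bounded M (init_config x) B"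
    using poly_time_runs_bounded[OF assms(1)] by blast
  have "length (options M c) \<le> 1" for c
    using assms(2) by (cases c) (simp add: deterministic_def options_def)
  then have "\<not> branching_reachable M c" for c
    unfolding branching_reachable_def by (metis Suc_1 not_less_eq_eq)
  then show ?thesis
    using comp_paths_from_unique comp_paths_from_nonempty[OF bounded]
    by (metis comp_paths_eq_from ex_in_conv insertI1 subsetI subset_singletonD)
qed

definition divert :: "ntm \<Rightarrow> (nat \<Rightarrow> nat \<Rightarrow> bool) \<Rightarrow> nat \<Rightarrow> ntm" where
  "divert M E g = \<lparr>ntm_states = Suc (ntm_states M), ntm_syms = ntm_syms M,
     ntm_delta = (\<lambda>q s. if q < ntm_states M then
        (if E q s then replicate g (ntm_states M, 0, 0) else ntm_delta M q s) else []),
     ntm_accept = {ntm_states M}\<rparr>"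

lemma step_choice_divert_continue:
  "q < ntm_states M \<Longrightarrow> \<not> E q (t h) \<Longrightarrow>
     step_choice (divert M E g) (q, t, h) i = step_choice M (q, t, h) i"
  by (simp add: step_choice_def divert_def)

lemma step_choice_divert_exit:
  "q < ntm_states M \<Longrightarrow> E q (t h) \<Longrightarrow>
     step_choice (divert M E g) (q, t, h) i =
       (if i < g then Some (ntm_states M, t(h := 0), h) else None)"
  by (simp add: step_choice_def divert_def Let_def)

lemma run_choices_divert_exit:
  "q < ntm_states M \<Longrightarrow> E q (t h) \<Longrightarrow> 0 < g \<Longrightarrow>
     run_choices (divert M E g) (q, t, h) [0] = Some (ntm_states M, t(h := 0), h)"
  by (simp add: step_choice_divert_exit)

lemma halted_divert_exit_state: "halted (divert M E g) (ntm_states M, t, h)"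
  by (simp add: halted_def divert_def)

lemma run_choices_divert_exit_state:
  "run_choices (divert M E g) (ntm_states M, t, h) cs \<noteq> None \<longleftrightarrow> cs = []"
  by (cases cs) (simp_all add: halted_step_choice[OF halted_divert_exit_state])

lemma ntm_accept_divert: "ntm_accept (divert M E g) = {ntm_states M}"
  by (simp add: divert_def)

lemma acc_paths_from_divert:
  "acc_paths_from (divert M E g) c =
     {cs. \<exists>t h. run_choices (divert M E g) c cs = Some (ntm_states M, t, h)}"
  by (auto simp: acc_paths_from_def halted_divert_exit_state ntm_accept_divert)

lemma halted_divert:
  "q < ntm_states M \<Longrightarrow>
     halted (divert M E g) (q, t, h) \<longleftrightarrow> (if E q (t h) then g = 0 else halted M (q, t, h))"
  by (simp add: halted_def divert_def)

lemma ntm_wf_divert: "ntm_wf M \<Longrightarrow> ntm_wf (divert M E g)"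
  unfolding ntm_wf_def divert_def by (fastforce split: if_splits simp: less_Suc_eq)

lemma run_choices_divert_butlast:
  assumes "ntm_wf M"
  shows "q < ntm_states M \<Longrightarrow> run_choices (divert M E g) (q, t, h) cs \<noteq> None \<Longrightarrow>
    run_choices M (q, t, h) (butlast cs) \<noteq> None"
proof (induction cs arbitrary: q t h)
  case (Cons i r)
  show ?case
  proof (cases "E q (t h)")
    case True
    then have "r = []"
      using Cons.prems step_choice_divert_exit[of q M E t h g i] run_choices_divert_exit_state
      by (auto split: if_splits)
    then show ?thesis by simp
  next
    case False
    with Cons.prems obtain q' t' h' where step: "step_choice M (q, t, h) i = Some (q', t', h')"
      and r: "run_choices (divert M E g) (q', t', h') r \<noteq> None"
      by (auto simp: step_choice_divert_continue split: option.splits)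
    have "q' < ntm_states M" using step_choice_state_less[OF assms step] by simp
    with Cons.IH r have "run_choices M (q', t', h') (butlast r) \<noteq> None" by blast
    then show ?thesis using step by simp
  qed
qed simp

lemma NPTM_divert:
  assumes "NPTM M"
  shows "NPTM (divert M E g)"
proof -
  have wf: "ntm_wf M" and "poly_time M" using assms by (auto simp: NPTM_def)
  then obtain k C where bound: "\<And>x cs. run_choices M (init_config x) cs \<noteq> None \<Longrightarrow>
      length cs \<le> C * length x ^ k + C"
    unfolding poly_time_def by blast
  have "length cs \<le> (C + 1) * length x ^ k + (C + 1)"
    if "run_choices (divert M E g) (init_config x) cs \<noteq> None" for x cs
  proof -
    have "run_choices M (init_config x) (butlast cs) \<noteq> None"
      using run_choices_divert_butlast[OF wf] that wf by (simp add: init_config_def ntm_wf_def)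
    then have "length (butlast cs) \<le> C * length x ^ k + C" by (rule bound)
    then show ?thesis by (simp add: algebra_simps)
  qed
  then have "poly_time (divert M E g)" unfolding poly_time_def by blast
  with ntm_wf_divert[OF wf] show ?thesis by (simp add: NPTM_def)
qed

lemma divert_exit_imp_reaches:
  assumes wf: "ntm_wf M" and "q < ntm_states M"
    and "run_choices (divert M E g) (q, t, h) cs = Some (ntm_states M, t', h')"
  shows "\<exists>cs q' t' h'. run_choices M (q, t, h) cs = Some (q', t', h') \<and> E q' (t' h')"
  using assms(2,3)
proof (induction cs arbitrary: q t h)
  case (Cons i r)
  show ?case
  proof (cases "E q (t h)")
    case False
    with Cons.prems obtain q1 t1 h1 where step: "step_choice M (q, t, h) i = Some (q1, t1, h1)"
      and r: "run_choices (divert M E g) (q1, t1, h1) r = Some (ntm_states M, t', h')"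
      by (auto simp: step_choice_divert_continue split: option.splits)
    have "q1 < ntm_states M" using step_choice_state_less[OF wf step] by simp
    with Cons.IH r obtain cs q'' t'' h'' where
      "run_choices M (q1, t1, h1) cs = Some (q'', t'', h'') \<and> E q'' (t'' h'')"
      by blast
    then have "run_choices M (q, t, h) (i # cs) = Some (q'', t'', h'') \<and> E q'' (t'' h'')"
      using step by simp
    then show ?thesis by blast
  qed (metis run_choices.simps(1))
qed simp

lemma reaches_imp_divert_exit:
  assumes wf: "ntm_wf M" and "0 < g" and "q < ntm_states M"
    and "run_choices M (q, t, h) cs = Some (q', t', h')" and "E q' (t' h')"
  shows "\<exists>cs t' h'. run_choices (divert M E g) (q, t, h) cs = Some (ntm_states M, t', h')"
  using assms(3-)
proof (induction cs arbitrary: q t h)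
  case Nil
  then have "E q (t h)" by simp
  from run_choices_divert_exit[where E = E and t = t and h = h, OF Nil.prems(1) this \<open>0 < g\<close>]
  show ?case by blast
next
  case (Cons i r)
  show ?case
  proof (cases "E q (t h)")
    case True
    from run_choices_divert_exit[where E = E and t = t and h = h, OF Cons.prems(1) this \<open>0 < g\<close>]
    show ?thesis by blast
  next
    case False
    with Cons.prems obtain q1 t1 h1 where step: "step_choice M (q, t, h) i = Some (q1, t1, h1)"
      and r: "run_choices M (q1, t1, h1) r = Some (q', t', h')"
      by (auto split: option.splits)
    have "q1 < ntm_states M" using step_choice_state_less[OF wf step] by simp
    with Cons.IH r Cons.prems(3) obtain cs t'' h'' where
      "run_choices (divert M E g) (q1, t1, h1) cs = Some (ntm_states M, t'', h'')"
      by blast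
    then have "run_choices (divert M E g) (q, t, h) (i # cs) = Some (ntm_states M, t'', h'')"
      using step False Cons.prems(1) by (simp add: step_choice_divert_continue)
    then show ?thesis by blast
  qed
qed

lemma divert_exit_iff_reaches:
  assumes "ntm_wf M" and "0 < g" and "q < ntm_states M"
  shows "(\<exists>cs t' h'. run_choices (divert M E g) (q, t, h) cs = Some (ntm_states M, t', h')) \<longleftrightarrow>
    (\<exists>cs q' t' h'. run_choices M (q, t, h) cs = Some (q', t', h') \<and> E q' (t' h'))"
proof
  assume "\<exists>cs t' h'. run_choices (divert M E g) (q, t, h) cs = Some (ntm_states M, t', h')"
  then obtain cs t' h' where "run_choices (divert M E g) (q, t, h) cs = Some (ntm_states M, t', h')"
    by blast
  then show "\<exists>cs q' t' h'. run_choices M (q, t, h) cs = Some (q', t', h') \<and> E q' (t' h')"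
    by (rule divert_exit_imp_reaches[OF assms(1,3)])
next
  assume "\<exists>cs q' t' h'. run_choices M (q, t, h) cs = Some (q', t', h') \<and> E q' (t' h')"
  then obtain cs q' t' h' where "run_choices M (q, t, h) cs = Some (q', t', h')" and "E q' (t' h')"
    by blast
  then show "\<exists>cs t' h'. run_choices (divert M E g) (q, t, h) cs = Some (ntm_states M, t', h')"
    by (rule reaches_imp_divert_exit[OF assms])
qed

definition halts_accepting :: "ntm \<Rightarrow> nat \<Rightarrow> nat \<Rightarrow> bool" where
  "halts_accepting M q s \<longleftrightarrow> ntm_delta M q s = [] \<and> q \<in> ntm_accept M"

lemma comp_paths_from_divert_exit_state:
  "cs \<in> comp_paths_from (divert M E g) (ntm_states M, t, h) \<longleftrightarrow> cs = []"
  using run_choices_divert_exit_state halted_divert_exit_state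
  by (fastforce simp: comp_paths_from_def)

lemma acc_paths_from_halted: "halted M c \<Longrightarrow> p \<in> acc_paths_from M c \<Longrightarrow> p = []"
  by (cases p) (auto simp: halted_step_choice)

lemma comp_paths_from_divert_halts_accepting:
  assumes wf: "ntm_wf M" and "0 < g" and "q < ntm_states M"
  shows "cs \<in> comp_paths_from (divert M (halts_accepting M) g) (q, t, h) \<longleftrightarrow>
    cs \<in> comp_paths_from M (q, t, h) - acc_paths_from M (q, t, h) \<or>
    (\<exists>p i. cs = p @ [i] \<and> i < g \<and> p \<in> acc_paths_from M (q, t, h))"
  using \<open>q < ntm_states M\<close>
proof (induction cs arbitrary: q t h)
  case Nil
  then show ?case
    using \<open>0 < g\<close> by (simp add: halted_divert) (auto simp: halts_accepting_def halted_def)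
next
  case (Cons i r)
  show ?case
  proof (cases "halts_accepting M q (t h)")
    case True
    then have "halted M (q, t, h)" and "[] \<in> acc_paths_from M (q, t, h)"
      by (simp_all add: halts_accepting_def halted_def)
    with True Cons.prems show ?thesis
      by (auto simp: step_choice_divert_exit comp_paths_from_divert_exit_state halted_step_choice
          Cons_eq_append_conv dest: acc_paths_from_halted)
  next
    case False
    then have not_acc: "\<not> (halted M (q, t, h) \<and> q \<in> ntm_accept M)"
      by (simp add: halts_accepting_def halted_def)
    have IH: "r \<in> comp_paths_from (divert M (halts_accepting M) g) (q', t', h') \<longleftrightarrow>
        r \<in> comp_paths_from M (q', t', h') - acc_paths_from M (q', t', h') \<or>
        (\<exists>p j. r = p @ [j] \<and> j < g \<and> p \<in> acc_paths_from M (q', t', h'))"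
      if "step_choice M (q, t, h) i = Some (q', t', h')" for q' t' h'
      using Cons.IH step_choice_state_less[OF wf that] by simp
    show ?thesis
      using False not_acc Cons.prems
      by (auto simp: step_choice_divert_continue IH Cons_eq_append_conv halted_step_choice)
        (metis IH)+
  qed
qed

lemma deterministic_acc_le_1:
  assumes "poly_time M" and "deterministic M"
  shows "acc M x \<le> 1"
proof -
  obtain p where "comp_paths M x = {p}"
    using deterministic_comp_paths_singleton[OF assms] by blast
  then have "acc_paths M x \<subseteq> {p}"
    using acc_paths_from_subset by (metis acc_paths_eq_from comp_paths_eq_from)
  then show ?thesis
    unfolding acc_def using card_mono[of "{p}" "acc_paths M x"] by simp
qed

lemma tot_divert_halts_accepting:
  assumes "NPTM M" and "deterministic M"
  shows "tot (divert M (halts_accepting M) 2) x = acc M x"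
proof -
  have wf: "ntm_wf M" and "poly_time M" using assms(1) by (auto simp: NPTM_def)
  obtain p where paths: "comp_paths_from M (init_config x) = {p}"
    using deterministic_comp_paths_singleton[OF \<open>poly_time M\<close> assms(2)]
    by (metis comp_paths_eq_from)
  obtain t0 where init: "init_config x = (0, t0, 0)" by (simp add: init_config_def)
  have "0 < ntm_states M" using wf by (simp add: ntm_wf_def)
  from comp_paths_from_divert_halts_accepting[where g = 2 and t = t0 and h = 0, OF wf _ this,
      folded init]
  have divert_paths: "cs \<in> comp_paths_from (divert M (halts_accepting M) 2) (init_config x) \<longleftrightarrow>
      cs \<in> comp_paths_from M (init_config x) - acc_paths_from M (init_config x) \<or>
      (\<exists>q i. cs = q @ [i] \<and> i < 2 \<and> q \<in> acc_paths_from M (init_config x))" for cs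
    by simp
  have acc_sub: "acc_paths_from M (init_config x) \<subseteq> {p}"
    using acc_paths_from_subset[of M "init_config x"] by (simp only: paths)
  show ?thesis
  proof (cases "p \<in> acc_paths_from M (init_config x)")
    case True
    with acc_sub have acc: "acc_paths_from M (init_config x) = {p}" by auto
    have "comp_paths_from (divert M (halts_accepting M) 2) (init_config x) = {p @ [0], p @ [1]}"
      by (rule set_eqI) (auto simp: divert_paths paths acc less_2_cases_iff)
    with acc show ?thesis
      by (simp add: tot_def acc_def comp_paths_eq_from acc_paths_eq_from)
  next
    case False
    with acc_sub have acc: "acc_paths_from M (init_config x) = {}" by auto
    have "comp_paths_from (divert M (halts_accepting M) 2) (init_config x) = {p}"
      by (rule set_eqI) (simp add: divert_paths paths acc)
    with acc show ?thesis
      by (simp add: tot_def acc_def comp_paths_eq_from acc_paths_eq_from)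
  qed
qed

lemma acc_divert_branching_pos_iff:
  assumes "NPTM M"
  shows "0 < acc (divert M (\<lambda>q s. 2 \<le> length (ntm_delta M q s)) 1) x \<longleftrightarrow> 0 < tot M x"
    (is "0 < acc ?N x \<longleftrightarrow> _")
proof -
  have wf: "ntm_wf M" and "poly_time M" using assms by (auto simp: NPTM_def)
  obtain t0 where init: "init_config x = (0, t0, 0)" by (simp add: init_config_def)
  have "0 < ntm_states M" using wf by (simp add: ntm_wf_def)
  have "poly_time ?N" using NPTM_divert[OF assms] by (simp add: NPTM_def)
  then obtain B where "runs_bounded ?N (init_config x) B"
    using poly_time_runs_bounded by blast
  then have "finite (acc_paths ?N x)"
    by (metis acc_paths_eq_from acc_paths_from_subset finite_comp_paths_from finite_subset)
  then have "0 < acc ?N x \<longleftrightarrow>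
      (\<exists>cs t' h'. run_choices ?N (init_config x) cs = Some (ntm_states M, t', h'))"
    by (simp add: acc_def card_gt_0_iff acc_paths_eq_from acc_paths_from_divert)
  also have "\<dots> \<longleftrightarrow> (\<exists>cs q' t' h'. run_choices M (init_config x) cs = Some (q', t', h') \<and>
      2 \<le> length (ntm_delta M q' (t' h')))"
    unfolding init by (rule divert_exit_iff_reaches[OF wf _ \<open>0 < ntm_states M\<close>]) simp
  also have "\<dots> \<longleftrightarrow> branching_reachable M (init_config x)"
    unfolding branching_reachable_def options_def by (auto split: prod.splits)
  also have "\<dots> \<longleftrightarrow> 0 < tot M x"
    using tot_pos_iff_branching_reachable[OF \<open>poly_time M\<close>] by simp
  finally show ?thesis .
qed

lemma P_class_subset_U_tot_P: "P_class \<subseteq> U_tot_P"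
proof
  fix L assume "L \<in> P_class"
  then obtain M where M: "NPTM M" "deterministic M" and L: "\<And>x. x \<in> L \<longleftrightarrow> 0 < acc M x"
    by (auto simp: P_class_def)
  let ?N = "divert M (halts_accepting M) 2"
  have "tot ?N \<in> TotP" using NPTM_divert[OF M(1)] by (auto simp: TotP_def)
  moreover have "(x \<in> L \<longrightarrow> tot ?N x = 1) \<and> (x \<notin> L \<longrightarrow> tot ?N x = 0)" for x
  proof -
    have "acc M x \<le> 1" using deterministic_acc_le_1 M by (simp add: NPTM_def)
    then show ?thesis using tot_divert_halts_accepting[OF M] L[of x] by auto
  qed
  ultimately show "L \<in> U_tot_P" unfolding U_tot_P_def by (auto intro!: bexI[of _ "tot ?N"])
qed

lemma U_tot_P_subset_Few_tot_P: "U_tot_P \<subseteq> Few_tot_P"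
proof
  fix L assume "L \<in> U_tot_P"
  then obtain f where "f \<in> TotP" and "\<And>x. (x \<in> L \<longrightarrow> f x = 1) \<and> (x \<notin> L \<longrightarrow> f x = 0)"
    unfolding U_tot_P_def by blast
  then have "(x \<in> L \<longrightarrow> 0 < f x \<and> f x \<le> 1 * length x ^ 0 + 1) \<and> (x \<notin> L \<longrightarrow> f x = 0)"
    for x by auto
  with \<open>f \<in> TotP\<close> show "L \<in> Few_tot_P" unfolding Few_tot_P_def by blast
qed

lemma Few_tot_P_subset_P_class: "Few_tot_P \<subseteq> P_class"
proof
  fix L assume "L \<in> Few_tot_P"
  then obtain f k C where f_TotP: "f \<in> TotP"
    and bounds: "\<And>x. (x \<in> L \<longrightarrow> 0 < f x \<and> f x \<le> C * length x ^ k + C) \<and> (x \<notin> L \<longrightarrow> f x = 0)"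
    unfolding Few_tot_P_def by blast
  have L: "x \<in> L \<longleftrightarrow> 0 < f x" for x using bounds[of x] by auto
  obtain M where M: "NPTM M" and f: "\<And>x. f x = tot M x"
    using f_TotP by (auto simp: TotP_def)
  let ?N = "divert M (\<lambda>q s. 2 \<le> length (ntm_delta M q s)) 1"
  have "deterministic ?N" by (simp add: deterministic_def divert_def)
  moreover have "x \<in> L \<longleftrightarrow> 0 < acc ?N x" for x
    using L f acc_divert_branching_pos_iff[OF M] by simp
  ultimately show "L \<in> P_class" using NPTM_divert[OF M] unfolding P_class_def by blast
qed

lemma P_class_subset_FewP: "P_class \<subseteq> FewP"
proof
  fix L assume "L \<in> P_class"
  then obtain M where M: "NPTM M" "deterministic M" and L: "\<And>x. x \<in> L \<longleftrightarrow> 0 < acc M x"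
    by (auto simp: P_class_def)
  have "acc M \<in> SharpP" using M(1) by (auto simp: SharpP_def)
  moreover have "(x \<in> L \<longrightarrow> 0 < acc M x \<and> acc M x \<le> 1 * length x ^ 0 + 1) \<and>
      (x \<notin> L \<longrightarrow> acc M x = 0)" for x
    using deterministic_acc_le_1[of M x] M L[of x] by (simp add: NPTM_def)
  ultimately show "L \<in> FewP" unfolding FewP_def by blast
qed

theorem proposition6:
  shows "(P_class = U_tot_P \<and> U_tot_P = Few_tot_P) \<and>
         (FewP \<subseteq> Few_tot_P \<longrightarrow> P_class = FewP)"
  using P_class_subset_U_tot_P U_tot_P_subset_Few_tot_P Few_tot_P_subset_P_class P_class_subset_FewP
  by blast

end
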